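(* Let $n\ge2$ and $1\le p<n$. Let $\varphi$ satisfy conditions (1)–(5) and assume $\lim_{t\to0^+}t/\varphi(t)=m<\infty$. Let $G\subset\mathbb R^n$ be the mushroom domain described below. Assume that there exist $q\in[1,\infty)$ and $C\in\mathbb R$ such that $$\inf_{b\in\mathbb R}\|u-b\|_{L^q(G)}\le C\|\nabla u\|_{L^p(G)}$$ holds for all $u\in L^1_p(G)$. Then $q=\frac{np}{n-p}$, and there exists $t_0>0$ such that $\varphi(t)\approx t$ for all $t\in(0,t_0]$.
   Context: Conditions on $\varphi:[0,\infty)\to[0,\infty)$: (1) continuous; (2) strictly increasing; (3) $\varphi(0)=\lim_{t\to0^+}\varphi(t)=0$; (4) there is $C_\varphi\ge1$ with $\varphi(t_1)/t_1\le C_\varphi\varphi(t_2)/t_2$ whenever $0<t_1\le t_2$; (5) there is $C^{\Delta_2}_\varphi\ge1$ with $\varphi(2t)\le C^{\Delta_2}_\varphi\varphi(t)$ for all $t>0$. $\varphi(t)\approx t$ on $(0,t_0]$ means there are constants $0<c_1\le c_2$ with $c_1t\le\varphi(t)\le c_2t$ there. Mushroom domain: Let $(r_m)_{m\ge1}$ be a decreasing sequence of positive numbers converging to $0$ with $\varphi(r_m)\le r_m$ for all $m$. Let $Q=\{x\in\mathbb R^n: x_i>0\text{ for all }i\}$. For each $m$, let $Q_m$ be a closed cube of side length $2r_m$ and $P_m$ a closed rectangular box with one side of length $r_m$ and the remaining $n-1$ sides of length $2\varphi(r_m)$. Each $P_m$ is placed outside $Q$ with one of its faces of size $(2\varphi(r_m))^{n-1}$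 lying in the face $\{x_1=0,\ x_2,\dots,x_n>0\}$ of $Q$ (its side of length $r_m$ perpendicular to that face), and the cube $Q_m$ is attached to the opposite face of $P_m$, forming a "mushroom" $Q_m\cup P_m$; the mushrooms are pairwise disjoint and each has distance at least $1$ and at most $4$ from the origin. Let $Q_m^*,P_m^*$ be images of $Q_m,P_m$ under an isometry moving them onto the face $\{x_2=0,\ x_1,x_3,\dots,x_n>0\}$ of $Q$ in the same way (pairwise disjoint, at distance between $1$ and $4$ from the origin). Set $G=\operatorname{int}\big(Q\cup\bigcup_{m=1}^\infty(Q_m\cup P_m\cup Q_m^*\cup P_m^* )\big)$. $L^1_p(G)=\{u\in L^1_{loc}(G):|\nabla u|\in L^p(G)\}$. *)

theory Defs
  imports "HOL-Analysis.Analysis"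
begin

definition admissible_phi :: "(real \<Rightarrow> real) \<Rightarrow> bool" where
  "admissible_phi \<phi> \<longleftrightarrow>
     (\<forall>t\<ge>0. \<phi> t \<ge> 0) \<and>
     continuous_on {0..} \<phi> \<and>
     strict_mono_on {0..} \<phi> \<and>
     \<phi> 0 = 0 \<and> (\<phi> \<longlongrightarrow> 0) (at_right 0) \<and>
     (\<exists>C\<ge>1. \<forall>t1 t2. 0 < t1 \<and> t1 \<le> t2 \<longrightarrow> \<phi> t1 / t1 \<le> C * (\<phi> t2 / t2)) \<and>
     (\<exists>C\<ge>1. \<forall>t>0. \<phi> (2 * t) \<le> C * \<phi> t)"

fun Ck :: "nat \<Rightarrow> ('a::euclidean_space \<Rightarrow> real) \<Rightarrow> bool" where
  "Ck 0 f \<longleftrightarrow> continuous_on UNIV f"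
| "Ck (Suc k) f \<longleftrightarrow> (\<forall>x. f differentiable (at x)) \<and>
      (\<forall>i\<in>Basis. Ck k (\<lambda>x. frechet_derivative f (at x) i))"

definition smooth_fun :: "('a::euclidean_space \<Rightarrow> real) \<Rightarrow> bool" where
  "smooth_fun f \<longleftrightarrow> (\<forall>k. Ck k f)"

definition test_fun :: "'a::euclidean_space set \<Rightarrow> ('a \<Rightarrow> real) \<Rightarrow> bool" where
  "test_fun G \<psi> \<longleftrightarrow> smooth_fun \<psi> \<and> compact (closure {x. \<psi> x \<noteq> 0}) \<and>
     closure {x. \<psi> x \<noteq> 0} \<subseteq> G"

definition loc_integrable :: "'a::euclidean_space set \<Rightarrow> ('a \<Rightarrow> real) \<Rightarrow> bool" where
  "loc_integrable G u \<longleftrightarrow> (\<forall>K. compact K \<and> K \<subseteq> G \<longrightarrow> set_integrable lebesgue K u)"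

definition weak_gradient :: "'a::euclidean_space set \<Rightarrow> ('a \<Rightarrow> real) \<Rightarrow> ('a \<Rightarrow> 'a) \<Rightarrow> bool" where
  "weak_gradient G u g \<longleftrightarrow>
     (\<forall>i\<in>Basis. loc_integrable G (\<lambda>x. g x \<bullet> i)) \<and>
     (\<forall>\<psi> i. test_fun G \<psi> \<and> i \<in> Basis \<longrightarrow>
        (LINT x:G|lebesgue. u x * frechet_derivative \<psi> (at x) i)
          = - (LINT x:G|lebesgue. (g x \<bullet> i) * \<psi> x))"

definition Lnorm :: "real \<Rightarrow> 'a::euclidean_space set \<Rightarrow> ('a \<Rightarrow> real) \<Rightarrow> ereal" where
  "Lnorm q S f =
     (let I = (\<integral>\<^sup>+x\<in>S. ennreal (\<bar>f x\<bar> powr q) \<partial>lebesgue)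
      in if I = \<infinity> then \<infinity> else ereal ((enn2real I) powr (1 / q)))"

definition L1p :: "real \<Rightarrow> 'a::euclidean_space set \<Rightarrow> ('a \<Rightarrow> real) \<Rightarrow> ('a \<Rightarrow> 'a) \<Rightarrow> bool" where
  "L1p p G u g \<longleftrightarrow> loc_integrable G u \<and> weak_gradient G u g \<and>
     g \<in> borel_measurable (restrict_space lebesgue G) \<and>
     Lnorm p G (\<lambda>x. norm (g x)) < \<infinity>"

text \<open>A family of mushrooms Q_m \<union> P_m attached to the face {x. x\<bullet>e = 0, x\<bullet>i > 0 (i \<noteq> e)}
  of the positive orthant.  c is the lower corner of P_m's base, d that of the cube Q_m.\<close>
definition mushrooms_on_face ::
  "'a::euclidean_space \<Rightarrow> (real \<Rightarrow> real) \<Rightarrow> (nat \<Rightarrow> real) \<Rightarrow> (nat \<Rightarrow> 'a set) \<Rightarrow> (nat \<Rightarrow> 'a set) \<Rightarrow> bool" where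
  "mushrooms_on_face e \<phi> r Qs Ps \<longleftrightarrow>
     (\<forall>m. \<exists>c d::'a.
        Ps m = {x. - r m \<le> x \<bullet> e \<and> x \<bullet> e \<le> 0 \<and>
                   (\<forall>i\<in>Basis - {e}. c \<bullet> i \<le> x \<bullet> i \<and> x \<bullet> i \<le> c \<bullet> i + 2 * \<phi> (r m))} \<and>
        Qs m = {x. - 3 * r m \<le> x \<bullet> e \<and> x \<bullet> e \<le> - r m \<and>
                   (\<forall>i\<in>Basis - {e}. d \<bullet> i \<le> x \<bullet> i \<and> x \<bullet> i \<le> d \<bullet> i + 2 * r m)} \<and>
        (\<forall>i\<in>Basis - {e}. 0 < c \<bullet> i \<and> d \<bullet> i \<le> c \<bullet> i \<and> c \<bullet> i + 2 * \<phi> (r m) \<le> d \<bullet> i + 2 * r m)) \<and>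
     (\<forall>m m'. m \<noteq> m' \<longrightarrow> (Qs m \<union> Ps m) \<inter> (Qs m' \<union> Ps m') = {}) \<and>
     (\<forall>m. 1 \<le> infdist 0 (Qs m \<union> Ps m) \<and> infdist 0 (Qs m \<union> Ps m) \<le> 4)"

definition mushroom_domain ::
  "'a::euclidean_space \<Rightarrow> 'a \<Rightarrow> (real \<Rightarrow> real) \<Rightarrow> 'a set \<Rightarrow> bool" where
  "mushroom_domain e1 e2 \<phi> G \<longleftrightarrow>
     (\<exists>r Qs Ps Qs' Ps'.
        (\<forall>m. 0 < r m) \<and> decseq r \<and> r \<longlonglongrightarrow> 0 \<and> (\<forall>m. \<phi> (r m) \<le> r m) \<and>
        mushrooms_on_face e1 \<phi> r Qs Ps \<and> mushrooms_on_face e2 \<phi> r Qs' Ps' \<and>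
        G = interior ({x. \<forall>i\<in>Basis. 0 < x \<bullet> i} \<union>
              (\<Union>m. Qs m \<union> Ps m \<union> Qs' m \<union> Ps' m)))"

end

theory Submission
  imports Defs
begin

text \<open>
  The positive orthant is a cone inside \<open>G\<close>, so it contains a \<open>C\<^sup>1\<close> bump \<open>u\<^sub>s\<close> of every radius \<open>s\<close>
  together with a ball of radius \<open>s/2\<close> on which \<open>u\<^sub>s\<close> vanishes. For every constant \<open>b\<close>,
  \<open>|u\<^sub>s - b| \<ge> 1/4\<close> on one of two such balls, so \<open>inf\<^sub>b \<parallel>u\<^sub>s - b\<parallel>\<^sub>q \<ge> c s\<^bsup>n/q\<^esup>\<close>, while
  \<open>\<parallel>\<nabla>u\<^sub>s\<parallel>\<^sub>p \<le> c' s\<^bsup>n/p - 1\<^esup>\<close>. The Poincare inequality for all \<open>s > 0\<close>, small and large,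
  forces \<open>n/q = n/p - 1\<close>.

  The comparison \<open>\<phi>(t) \<approx> t\<close> needs only the limit hypothesis and the mushroom radii:
  \<open>\<phi>(r\<^sub>m) \<le> r\<^sub>m\<close> gives \<open>m \<ge> 1\<close>, so \<open>t/\<phi>(t)\<close> stays in \<open>[m/2, 2m]\<close> near \<open>0\<close>.
\<close>

lemma admissible_phi_pos:
  assumes "admissible_phi \<phi>" and "0 < t"
  shows "0 < \<phi> t"
  using assms strict_mono_onD[of "{0..}" \<phi> 0 t] by (auto simp: admissible_phi_def)

lemma ratio_limit_ge_1:
  fixes \<phi> r :: "_ \<Rightarrow> real"
  assumes pos: "\<And>t. 0 < t \<Longrightarrow> 0 < \<phi> t"
    and lim: "((\<lambda>t. t / \<phi> t) \<longlongrightarrow> m) (at_right 0)"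
    and r_pos: "\<And>k. 0 < r k" and r_lim: "r \<longlonglongrightarrow> 0" and r_ge: "\<And>k. \<phi> (r k) \<le> r k"
  shows "1 \<le> m"
proof (rule LIMSEQ_le_const)
  have "filterlim r (at_right 0) sequentially"
    using r_lim r_pos by (intro tendsto_imp_filterlim_at_right) (auto intro: always_eventually)
  then show "(\<lambda>k. r k / \<phi> (r k)) \<longlonglongrightarrow> m"
    by (rule filterlim_compose[OF lim])
  show "\<exists>N. \<forall>k\<ge>N. 1 \<le> r k / \<phi> (r k)"
    using r_ge r_pos pos by (simp add: divide_simps)
qed

lemma linear_bounds_near_0_if_ratio_tendsto:
  fixes \<phi> :: "real \<Rightarrow> real"
  assumes pos: "\<And>t. 0 < t \<Longrightarrow> 0 < \<phi> t"
    and lim: "((\<lambda>t. t / \<phi> t) \<longlongrightarrow> m) (at_right 0)" and m: "0 < m"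
  shows "\<exists>t0>0. \<exists>c1 c2. 0 < c1 \<and> c1 \<le> c2 \<and>
           (\<forall>t\<in>{0<..t0}. c1 * t \<le> \<phi> t \<and> \<phi> t \<le> c2 * t)"
proof -
  have "eventually (\<lambda>t. t / \<phi> t \<in> {m/2<..<2*m}) (at_right 0)"
    using lim m by (intro topological_tendstoD) auto
  then obtain b where b: "0 < b" and near: "\<And>t. 0 < t \<Longrightarrow> t < b \<Longrightarrow> t / \<phi> t \<in> {m/2<..<2*m}"
    using eventually_at_right[of "0::real" 1] by auto
  have "1 / (2 * m) * t \<le> \<phi> t \<and> \<phi> t \<le> 2 / m * t" if "t \<in> {0<..b/2}" for t
    using near[of t] pos[of t] that b m by (auto simp: field_simps)
  moreover have "0 < 1 / (2 * m)" "1 / (2 * m) \<le> 2 / m" "0 < b/2"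
    using m b by (auto simp: field_simps)
  ultimately show ?thesis by blast
qed

lemma powr_bounded_imp_exponent_eq_0:
  fixes e K :: real
  assumes "\<forall>s>0. s powr e \<le> K"
  shows "e = 0"
proof (rule ccontr)
  assume e: "e \<noteq> 0"
  define s where "s = (\<bar>K\<bar> + 1) powr (1/e)"
  have "s powr e = \<bar>K\<bar> + 1"
    using e by (simp add: s_def powr_powr)
  moreover have "0 < s" by (simp add: s_def)
  ultimately show False using assms by force
qed

lemma integrable_continuous_vanishing_outside_ball:
  fixes f :: "'a::euclidean_space \<Rightarrow> 'b::{banach, second_countable_topology}"
  assumes "continuous_on UNIV f" and "\<And>x. R < norm x \<Longrightarrow> f x = 0"
  shows "integrable lborel f"
proof -
  have "(\<lambda>x. indicator (cball 0 R) x *\<^sub>R f x) = f"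
    using assms(2) by (auto simp: fun_eq_iff indicator_def)
  moreover have "integrable lborel (\<lambda>x. indicator (cball 0 R) x *\<^sub>R f x)"
    by (rule borel_integrable_compact) (auto intro: continuous_on_subset[OF assms(1)])
  ultimately show ?thesis by simp
qed

lemma continuous_imp_loc_integrable:
  fixes f :: "'a::euclidean_space \<Rightarrow> real"
  assumes "continuous_on UNIV f"
  shows "loc_integrable G f"
  unfolding loc_integrable_def
proof (intro allI impI)
  fix K :: "'a set" assume "compact K \<and> K \<subseteq> G"
  then have "integrable lborel (\<lambda>x. indicator K x *\<^sub>R f x)"
    by (intro borel_integrable_compact) (auto intro: continuous_on_subset[OF assms])
  then have "integrable lebesgue (\<lambda>x. indicator K x *\<^sub>R f x)"
    by (subst integrable_completion) (auto dest: borel_measurable_integrable)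
  then show "set_integrable lebesgue K f" by (simp add: set_integrable_def)
qed

lemma set_lebesgue_integral_eq_lborel_integral:
  fixes f :: "'a::euclidean_space \<Rightarrow> real"
  assumes "continuous_on UNIV f" and "\<And>x. x \<notin> G \<Longrightarrow> f x = 0"
  shows "(LINT x:G|lebesgue. f x) = integral\<^sup>L lborel f"
proof -
  have "(\<lambda>x. indicator G x *\<^sub>R f x) = f"
    using assms(2) by (auto simp: fun_eq_iff indicator_def)
  then have "(LINT x:G|lebesgue. f x) = integral\<^sup>L lebesgue f"
    by (simp add: set_lebesgue_integral_def)
  also have "\<dots> = integral\<^sup>L lborel f"
    using assms(1) borel_measurable_continuous_onI by (intro integral_completion) simp
  finally show ?thesis .
qed

lemma lborel_integral_translate:
  fixes f :: "'a::euclidean_space \<Rightarrow> real"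
  assumes [measurable]: "f \<in> borel_measurable borel"
  shows "(\<integral>x. f (x + c) \<partial>lborel) = (\<integral>x. f x \<partial>lborel)"
proof -
  have "(\<integral>x. f x \<partial>lborel) = (\<integral>x. f x \<partial>distr lborel borel ((+) c))"
    by (simp add: lborel_distr_plus)
  also have "\<dots> = (\<integral>x. f (c + x) \<partial>lborel)"
    by (rule integral_distr) auto
  finally show ?thesis by (simp add: add.commute)
qed

lemma lborel_integrable_translate:
  fixes f :: "'a::euclidean_space \<Rightarrow> real"
  assumes "integrable lborel f"
  shows "integrable lborel (\<lambda>x. f (x + c))"
proof -
  have [measurable]: "f \<in> borel_measurable borel"
    using borel_measurable_integrable[OF assms] by simp
  have "integrable (distr lborel borel ((+) c)) f"
    using assms by (simp add: lborel_distr_plus)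
  then have "integrable lborel (\<lambda>x. f (c + x))"
    by (subst (asm) integrable_distr_eq) auto
  then show ?thesis by (simp add: add.commute)
qed

lemma has_derivative_zero_if_vanishes_on_open:
  assumes "(f has_derivative f') (at x)" and "open S" and "x \<in> S" and "\<And>y. y \<in> S \<Longrightarrow> f y = 0"
  shows "f' = (\<lambda>_. 0)"
proof -
  have "((\<lambda>_. 0) has_derivative f') (at x)"
    by (rule has_derivative_transform_within_open[OF assms(1-3)]) (use assms(4) in auto)
  then show ?thesis using has_derivative_unique has_derivative_const by blast
qed

lemma has_real_derivative_along_line:
  fixes f :: "'a::real_normed_vector \<Rightarrow> real"
  assumes "(f has_derivative f') (at (x + t *\<^sub>R v))"
  shows "((\<lambda>t. f (x + t *\<^sub>R v)) has_real_derivative f' v) (at t)"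
proof -
  have "((\<lambda>t. x + t *\<^sub>R v) has_derivative (\<lambda>d. d *\<^sub>R v)) (at t)"
    by (auto intro!: derivative_eq_intros)
  from has_derivative_compose[OF this assms]
  have "((\<lambda>t. f (x + t *\<^sub>R v)) has_derivative (\<lambda>d. f' (d *\<^sub>R v))) (at t)" .
  moreover have "(\<lambda>d. f' (d *\<^sub>R v)) = (*) (f' v)"
    using has_derivative_linear[OF assms] by (simp add: linear_scale fun_eq_iff)
  ultimately show ?thesis unfolding has_field_derivative_def by simp
qed

lemma abs_difference_quotient_le_indicator:
  fixes f :: "'a::euclidean_space \<Rightarrow> real" and f' :: "'a \<Rightarrow> 'a \<Rightarrow> real"
  assumes der: "\<And>x. (f has_derivative f' x) (at x)"
    and supp: "\<And>x. R < norm x \<Longrightarrow> f x = 0" and v: "norm v = 1"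
    and M: "\<And>y. y \<in> cball 0 (R + 2) \<Longrightarrow> \<bar>f' y v\<bar> \<le> M" and h: "0 < h" "h \<le> 1"
  shows "\<bar>(f (x + h *\<^sub>R v) - f x) / h\<bar> \<le> M * indicator (cball 0 (R + 1)) x"
proof (cases "norm x \<le> R + 1")
  case False
  have "norm x - h \<le> norm (x + h *\<^sub>R v)"
    using norm_triangle_ineq2[of x "- h *\<^sub>R v"] h v by simp
  then have "f (x + h *\<^sub>R v) = 0" "f x = 0"
    using False h by (auto intro!: supp)
  then show ?thesis using False by simp
next
  case True
  obtain z where z: "0 < z" "z < h" "f (x + h *\<^sub>R v) - f (x + 0 *\<^sub>R v) = (h - 0) * f' (x + z *\<^sub>R v) v"
    using MVT2[OF h(1) has_real_derivative_along_line[OF der]] by blast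
  have "norm (x + z *\<^sub>R v) \<le> norm x + z"
    using norm_triangle_ineq[of x "z *\<^sub>R v"] v z by simp
  then have "\<bar>f' (x + z *\<^sub>R v) v\<bar> \<le> M"
    using True z h by (intro M) simp
  then show ?thesis using True z h by simp
qed

text \<open>The difference quotients integrate to \<open>0\<close> by translation invariance and converge
  dominatedly by the mean value theorem.\<close>
lemma integral_directional_derivative_eq_0:
  fixes f :: "'a::euclidean_space \<Rightarrow> real" and f' :: "'a \<Rightarrow> 'a \<Rightarrow> real"
  assumes der: "\<And>x. (f has_derivative f' x) (at x)"
    and cont: "continuous_on UNIV (\<lambda>x. f' x v)"
    and supp: "\<And>x. R < norm x \<Longrightarrow> f x = 0" and v: "norm v = 1"
  shows "(\<integral>x. f' x v \<partial>lborel) = 0"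
proof -
  have f_cont: "continuous_on UNIV f"
    using der by (meson continuous_at_imp_continuous_on has_derivative_continuous)
  have [measurable]: "f \<in> borel_measurable borel" "(\<lambda>x. f' x v) \<in> borel_measurable borel"
    using f_cont cont by (auto intro: borel_measurable_continuous_onI)
  have "compact ((\<lambda>x. f' x v) ` cball 0 (R + 2))"
    by (rule compact_continuous_image[OF continuous_on_subset[OF cont]]) auto
  then obtain M where M: "\<And>y. y \<in> cball 0 (R + 2) \<Longrightarrow> \<bar>f' y v\<bar> \<le> M"
    using compact_imp_bounded bounded_iff by (metis image_eqI real_norm_def)
  define h where "h k = inverse (real (Suc k))" for k
  have h: "0 < h k" "h k \<le> 1" for k
    unfolding h_def by (auto simp: field_simps)
  define dq where "dq k x = (f (x + h k *\<^sub>R v) - f x) / h k" for k x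
  have "integrable lborel f"
    by (rule integrable_continuous_vanishing_outside_ball[OF f_cont supp])
  then have dq_integral: "(\<integral>x. dq k x \<partial>lborel) = 0" for k
    by (simp add: dq_def lborel_integrable_translate lborel_integral_translate)
  have dq_tendsto: "(\<lambda>k. dq k x) \<longlonglongrightarrow> f' x v" for x
  proof -
    have "((\<lambda>t. (f (x + t *\<^sub>R v) - f x) / t) \<longlongrightarrow> f' x v) (at 0)"
      using has_real_derivative_along_line[of f "f' x" x 0 v] der unfolding DERIV_def by simp
    moreover have "filterlim h (at 0) sequentially"
      unfolding filterlim_at h_def using LIMSEQ_inverse_real_of_nat by auto
    ultimately show ?thesis unfolding dq_def by (rule filterlim_compose)
  qed
  have "emeasure lborel (cball (0::'a) (R + 1)) < \<infinity>"
    by (rule emeasure_compact_finite) simp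
  then have "integrable lborel (\<lambda>x::'a. M * indicator (cball 0 (R + 1)) x :: real)"
    by (intro integrable_mult_right integrable_real_indicator) simp_all
  then have "(\<lambda>k. \<integral>x. dq k x \<partial>lborel) \<longlonglongrightarrow> (\<integral>x. f' x v \<partial>lborel)"
    by (intro integral_dominated_convergence[where w="\<lambda>x. M * indicator (cball 0 (R + 1)) x"])
      (use dq_tendsto abs_difference_quotient_le_indicator[OF der supp v M h] in \<open>auto simp: dq_def\<close>)
  then show ?thesis
    using dq_integral LIMSEQ_unique[OF _ tendsto_const] by simp
qed

lemma test_fun_C1:
  assumes "test_fun G \<psi>"
  shows "Ck 1 \<psi>"
  using assms by (simp add: test_fun_def smooth_fun_def)

lemma test_fun_has_derivative:
  assumes "test_fun G \<psi>"
  shows "(\<psi> has_derivative frechet_derivative \<psi> (at x)) (at x)"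
proof -
  have "\<psi> differentiable (at x)"
    using test_fun_C1[OF assms] by simp
  then show ?thesis unfolding frechet_derivative_works .
qed

lemma test_fun_continuous_on_partial:
  assumes "test_fun G \<psi>" and "i \<in> Basis"
  shows "continuous_on UNIV (\<lambda>x. frechet_derivative \<psi> (at x) i)"
  using test_fun_C1[OF assms(1)] assms(2) by simp

lemma test_fun_vanishes_outside:
  assumes "test_fun G \<psi>"
  obtains R where "\<And>x. x \<notin> G \<or> R < norm x \<Longrightarrow> \<psi> x = 0 \<and> frechet_derivative \<psi> (at x) = (\<lambda>_. 0)"
proof -
  define T where "T = closure {x. \<psi> x \<noteq> 0}"
  have "compact T" "T \<subseteq> G"
    using assms by (simp_all add: test_fun_def T_def)
  then obtain R where R: "\<forall>x\<in>T. norm x \<le> R"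
    using compact_imp_bounded bounded_iff by metis
  have vanish: "\<psi> y = 0" if "y \<notin> T" for y
    using that closure_subset[of "{x. \<psi> x \<noteq> 0}"] unfolding T_def by blast
  have "open (- T)"
    by (simp add: T_def open_Compl)
  then have deriv: "frechet_derivative \<psi> (at x) = (\<lambda>_. 0)" if "x \<notin> T" for x
    using that vanish
    by (intro has_derivative_zero_if_vanishes_on_open[OF test_fun_has_derivative[OF assms]]) auto
  show thesis
  proof (rule that)
    fix x assume "x \<notin> G \<or> R < norm x"
    then have "x \<notin> T"
      using R \<open>T \<subseteq> G\<close> by force
    then show "\<psi> x = 0 \<and> frechet_derivative \<psi> (at x) = (\<lambda>_. 0)"
      using vanish deriv by simp
  qed
qed

lemma weak_gradient_if_continuously_differentiable:
  fixes u :: "'a::euclidean_space \<Rightarrow> real"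
  assumes u: "\<And>x. (u has_derivative (\<lambda>v. g x \<bullet> v)) (at x)" and g: "continuous_on UNIV g"
  shows "weak_gradient G u g"
  unfolding weak_gradient_def
proof (intro conjI ballI allI impI)
  fix i :: 'a assume "i \<in> Basis"
  show "loc_integrable G (\<lambda>x. g x \<bullet> i)"
    by (intro continuous_imp_loc_integrable continuous_intros g)
next
  fix \<psi> :: "'a \<Rightarrow> real" and i :: 'a
  assume "test_fun G \<psi> \<and> i \<in> Basis"
  then have \<psi>: "test_fun G \<psi>" and i: "i \<in> Basis" by auto
  define \<psi>' where "\<psi>' x = frechet_derivative \<psi> (at x)" for x
  obtain R where out: "\<And>x. x \<notin> G \<or> R < norm x \<Longrightarrow> \<psi> x = 0 \<and> \<psi>' x = (\<lambda>_. 0)"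
    using test_fun_vanishes_outside[OF \<psi>] unfolding \<psi>'_def by blast
  have \<psi>_der: "(\<psi> has_derivative \<psi>' x) (at x)" for x
    unfolding \<psi>'_def by (rule test_fun_has_derivative[OF \<psi>])
  have u_cont: "continuous_on UNIV u"
    using u by (meson continuous_at_imp_continuous_on has_derivative_continuous)
  have \<psi>_cont: "continuous_on UNIV \<psi>"
    using \<psi>_der by (meson continuous_at_imp_continuous_on has_derivative_continuous)
  have c1: "continuous_on UNIV (\<lambda>x. u x * \<psi>' x i)"
    unfolding \<psi>'_def by (intro continuous_intros u_cont test_fun_continuous_on_partial[OF \<psi> i])
  have c2: "continuous_on UNIV (\<lambda>x. (g x \<bullet> i) * \<psi> x)"
    by (intro continuous_intros g \<psi>_cont)
  have "(\<integral>x. u x * \<psi>' x i + (g x \<bullet> i) * \<psi> x \<partial>lborel) = 0"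
  proof (rule integral_directional_derivative_eq_0)
    show "((\<lambda>x. u x * \<psi> x) has_derivative (\<lambda>v. u x * \<psi>' x v + (g x \<bullet> v) * \<psi> x)) (at x)" for x
      by (rule has_derivative_mult[OF u \<psi>_der])
    show "continuous_on UNIV (\<lambda>x. u x * \<psi>' x i + (g x \<bullet> i) * \<psi> x)"
      by (rule continuous_on_add[OF c1 c2])
    show "R < norm x \<Longrightarrow> u x * \<psi> x = 0" for x
      using out by simp
  qed (use i in simp)
  moreover have "integrable lborel (\<lambda>x. u x * \<psi>' x i)" "integrable lborel (\<lambda>x. (g x \<bullet> i) * \<psi> x)"
    using out by (intro integrable_continuous_vanishing_outside_ball[OF c1, of R]
        integrable_continuous_vanishing_outside_ball[OF c2, of R]; simp)+
  moreover have "(LINT x:G|lebesgue. u x * \<psi>' x i) = (\<integral>x. u x * \<psi>' x i \<partial>lborel)"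
    "(LINT x:G|lebesgue. (g x \<bullet> i) * \<psi> x) = (\<integral>x. (g x \<bullet> i) * \<psi> x \<partial>lborel)"
    using out by (auto intro: set_lebesgue_integral_eq_lborel_integral[OF c1]
        set_lebesgue_integral_eq_lborel_integral[OF c2])
  ultimately show "(LINT x:G|lebesgue. u x * frechet_derivative \<psi> (at x) i) =
      - (LINT x:G|lebesgue. (g x \<bullet> i) * \<psi> x)"
    unfolding \<psi>'_def by simp
qed

lemma has_real_derivative_pos_part_square:
  "((\<lambda>t. (max 0 t)\<^sup>2) has_real_derivative 2 * max 0 t) (at t)"
proof (cases t "0::real" rule: linorder_cases)
  case less
  have "((\<lambda>_. 0) has_real_derivative 2 * max 0 t) (at t)"
    using less by simp
  then show ?thesis
    by (rule has_field_derivative_transform_within_open[of _ _ _ "{..<0}"]) (use less in auto)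
next
  case equal
  have "((\<lambda>h. max 0 h) \<longlongrightarrow> max 0 0) (at (0::real))"
    by (intro tendsto_intros)
  moreover have "(\<lambda>h. ((max 0 h)\<^sup>2 - (max 0 0)\<^sup>2) / h) = (\<lambda>h::real. max 0 h)"
    by (auto simp: fun_eq_iff power2_eq_square max_def)
  ultimately show ?thesis
    using equal unfolding DERIV_def by simp
next
  case greater
  have "((\<lambda>t. t\<^sup>2) has_real_derivative 2 * max 0 t) (at t)"
    using greater by (auto intro!: derivative_eq_intros)
  then show ?thesis
    by (rule has_field_derivative_transform_within_open[of _ _ _ "{0<..}"]) (use greater in auto)
qed

definition bump :: "real \<Rightarrow> 'a::euclidean_space \<Rightarrow> 'a \<Rightarrow> real" where
  "bump s x0 x = (max 0 (1 - (x - x0) \<bullet> (x - x0) / s\<^sup>2))\<^sup>2"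

definition bump_grad :: "real \<Rightarrow> 'a::euclidean_space \<Rightarrow> 'a \<Rightarrow> 'a" where
  "bump_grad s x0 x = (- 4 * max 0 (1 - (x - x0) \<bullet> (x - x0) / s\<^sup>2) / s\<^sup>2) *\<^sub>R (x - x0)"

lemma has_derivative_bump:
  assumes "0 < s"
  shows "(bump s x0 has_derivative (\<lambda>v. bump_grad s x0 x \<bullet> v)) (at x)"
proof -
  define w where "w = 1 - (x - x0) \<bullet> (x - x0) / s\<^sup>2"
  have "((\<lambda>x. 1 - (x - x0) \<bullet> (x - x0) / s\<^sup>2) has_derivative
      (\<lambda>v. - (v \<bullet> (x - x0) + (x - x0) \<bullet> v) / s\<^sup>2)) (at x)"
    using assms by (auto intro!: derivative_eq_intros simp: field_simps fun_eq_iff power2_eq_square)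
  moreover have "((\<lambda>t. (max 0 t)\<^sup>2) has_derivative (*) (2 * max 0 w)) (at w)"
    using has_real_derivative_pos_part_square[of w] unfolding has_field_derivative_def .
  ultimately have "(bump s x0 has_derivative
      (\<lambda>v. 2 * max 0 w * (- (v \<bullet> (x - x0) + (x - x0) \<bullet> v) / s\<^sup>2))) (at x)"
    unfolding bump_def[abs_def] w_def by (rule has_derivative_compose)
  moreover have "2 * max 0 w * (- (v \<bullet> (x - x0) + (x - x0) \<bullet> v) / s\<^sup>2) = bump_grad s x0 x \<bullet> v" for v
    unfolding bump_grad_def inner_scaleR_left inner_commute[of v] w_def by (simp add: field_simps)
  ultimately show ?thesis by simp
qed

lemma continuous_on_bump: "0 < s \<Longrightarrow> continuous_on UNIV (bump s x0)"
  using has_derivative_bump by (meson continuous_at_imp_continuous_on has_derivative_continuous)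

lemma continuous_on_bump_grad: "0 < s \<Longrightarrow> continuous_on UNIV (bump_grad s x0)"
  unfolding bump_grad_def by (intro continuous_intros) auto

lemma bump_eq_0_outside:
  assumes "0 < s" and "s \<le> norm (x - x0)"
  shows "bump s x0 x = 0" and "bump_grad s x0 x = 0"
proof -
  have "s\<^sup>2 \<le> (norm (x - x0))\<^sup>2"
    using assms by (intro power_mono) auto
  then have "s\<^sup>2 \<le> (x - x0) \<bullet> (x - x0)"
    by (simp add: power2_norm_eq_inner)
  then have "1 - (x - x0) \<bullet> (x - x0) / s\<^sup>2 \<le> 0"
    using assms by (simp add: field_simps)
  then show "bump s x0 x = 0" "bump_grad s x0 x = 0"
    by (auto simp: bump_def bump_grad_def max_def)
qed

lemma norm_bump_grad_le:
  assumes "0 < s"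
  shows "norm (bump_grad s x0 x) \<le> 4 / s"
proof (cases "s \<le> norm (x - x0)")
  case True
  then show ?thesis using bump_eq_0_outside[OF assms True] assms by simp
next
  case False
  have "max 0 (1 - (x - x0) \<bullet> (x - x0) / s\<^sup>2) \<le> 1"
    using assms by (simp add: field_simps)
  then have "norm (bump_grad s x0 x) \<le> 4 * 1 / s\<^sup>2 * s"
    unfolding bump_grad_def using False assms
    by (auto intro!: mult_mono divide_right_mono mult_left_mono)
  then show ?thesis
    using assms by (simp add: power2_eq_square)
qed

lemma bump_ge_half:
  assumes "0 < s" and "norm (x - x0) \<le> s / 2"
  shows "1/2 \<le> bump s x0 x"
proof -
  have "(norm (x - x0))\<^sup>2 \<le> (s/2)\<^sup>2"
    using assms by (intro power_mono) auto
  then have "(x - x0) \<bullet> (x - x0) \<le> (s/2)\<^sup>2"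
    by (simp add: power2_norm_eq_inner)
  then have "(x - x0) \<bullet> (x - x0) / s\<^sup>2 \<le> 1/4"
    using assms by (simp add: field_simps power2_eq_square)
  then have "3/4 \<le> max 0 (1 - (x - x0) \<bullet> (x - x0) / s\<^sup>2)"
    by linarith
  then have "(3/4)\<^sup>2 \<le> bump s x0 x"
    unfolding bump_def by (rule power_mono) simp
  then show ?thesis
    by (simp add: power2_eq_square)
qed

lemma powr_mult_powr_scale:
  fixes A s k r :: real
  assumes "0 \<le> A" and "0 < s"
  shows "(A * s powr k) powr (1/r) = A powr (1/r) * s powr (k/r)"
  using assms by (simp add: powr_mult powr_powr)

lemma Lnorm_nonneg: "0 \<le> Lnorm q S f"
  unfolding Lnorm_def Let_def by auto

lemma Lnorm_le_if_le_indicator: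
  fixes f :: "'a::euclidean_space \<Rightarrow> real"
  assumes p: "0 < p" and A: "A \<in> sets lebesgue" and mA: "emeasure lebesgue A = ennreal V"
    and V: "0 \<le> V" and c: "0 \<le> c"
    and bound: "\<And>x. x \<in> S \<Longrightarrow> \<bar>f x\<bar> powr p \<le> c * indicator A x"
  shows "Lnorm p S f \<le> ereal ((c * V) powr (1/p))"
proof -
  let ?I = "\<integral>\<^sup>+x\<in>S. ennreal (\<bar>f x\<bar> powr p) \<partial>lebesgue"
  have "ennreal (\<bar>f x\<bar> powr p) * indicator S x \<le> ennreal c * indicator A x" for x
  proof (cases "x \<in> S")
    case True
    then show ?thesis using bound[of x] by (cases "x \<in> A") (auto simp: indicator_def intro: ennreal_leI)
  qed simp
  then have "?I \<le> (\<integral>\<^sup>+x. ennreal c * indicator A x \<partial>lebesgue)"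
    by (intro nn_integral_mono)
  also have "\<dots> = ennreal (c * V)"
    using A mA c V by (simp add: nn_integral_cmult_indicator ennreal_mult)
  finally have I: "?I \<le> ennreal (c * V)" .
  then have "?I \<noteq> \<infinity>"
    using le_less_trans[OF I ennreal_less_top] by simp
  moreover have "enn2real ?I \<le> c * V"
    using enn2real_mono[OF I] c V by simp
  ultimately show ?thesis
    unfolding Lnorm_def Let_def using p by (simp add: powr_mono2)
qed

lemma Lnorm_ge_if_ge_on:
  fixes f :: "'a::euclidean_space \<Rightarrow> real"
  assumes q: "0 < q" and A: "A \<in> sets lebesgue" and mA: "emeasure lebesgue A = ennreal V"
    and V: "0 \<le> V" and c: "0 \<le> c" and AS: "A \<subseteq> S"
    and bound: "\<And>x. x \<in> A \<Longrightarrow> c \<le> \<bar>f x\<bar> powr q"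
  shows "ereal ((c * V) powr (1/q)) \<le> Lnorm q S f"
proof -
  let ?I = "\<integral>\<^sup>+x\<in>S. ennreal (\<bar>f x\<bar> powr q) \<partial>lebesgue"
  have "ennreal (c * V) = (\<integral>\<^sup>+x. ennreal c * indicator A x \<partial>lebesgue)"
    using A mA c V by (simp add: nn_integral_cmult_indicator ennreal_mult)
  also have "\<dots> \<le> ?I"
    using bound AS by (intro nn_integral_mono) (auto simp: indicator_def)
  finally have I: "ennreal (c * V) \<le> ?I" .
  show ?thesis
  proof (cases "?I = \<infinity>")
    case False
    then have "c * V \<le> enn2real ?I"
      using enn2real_mono[OF I] c V by (simp add: top.not_eq_extremum)
    then show ?thesis
      unfolding Lnorm_def Let_def using False q c V by (simp add: powr_mono2)
  qed (simp add: Lnorm_def)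
qed

lemma Lnorm_bump_grad_le:
  fixes x0 :: "'a::euclidean_space" and p :: real
  assumes s: "0 < s" and p: "0 < p"
  shows "Lnorm p G (\<lambda>x. norm (bump_grad s x0 x)) \<le>
    ereal ((4 powr p * unit_ball_vol DIM('a)) powr (1/p) * s powr ((real DIM('a) - p) / p))"
proof -
  have "Lnorm p G (\<lambda>x. norm (bump_grad s x0 x)) \<le>
      ereal (((4/s) powr p * (unit_ball_vol DIM('a) * s ^ DIM('a))) powr (1/p))"
  proof (rule Lnorm_le_if_le_indicator[OF p])
    show "emeasure lebesgue (cball x0 s) = ennreal (unit_ball_vol DIM('a) * s ^ DIM('a))"
      using emeasure_cball[of s x0] s by simp
    show "\<bar>norm (bump_grad s x0 x)\<bar> powr p \<le> (4/s) powr p * indicator (cball x0 s) x" for x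
      using bump_eq_0_outside[OF s, of x x0] norm_bump_grad_le[OF s, of x0 x] p
      by (cases "x \<in> cball x0 s") (auto simp: dist_norm norm_minus_commute intro: powr_mono2)
  qed (use s in auto)
  also have "(4/s) powr p * (unit_ball_vol DIM('a) * s ^ DIM('a))
      = (4 powr p * unit_ball_vol DIM('a)) * (s powr DIM('a) / s powr p)"
    using s by (simp add: powr_realpow powr_divide)
  also have "s powr DIM('a) / s powr p = s powr (DIM('a) - p)"
    by (simp add: powr_diff)
  also have "((4 powr p * unit_ball_vol DIM('a)) * s powr (DIM('a) - p)) powr (1/p)
      = (4 powr p * unit_ball_vol DIM('a)) powr (1/p) * s powr ((real DIM('a) - p) / p)"
    using s by (intro powr_mult_powr_scale) auto
  finally show ?thesis .
qed

lemma L1p_bump: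
  fixes x0 :: "'a::euclidean_space" and p :: real
  assumes s: "0 < s" and p: "0 < p"
  shows "L1p p G (bump s x0) (bump_grad s x0)"
  unfolding L1p_def
proof (intro conjI)
  show "loc_integrable G (bump s x0)"
    by (rule continuous_imp_loc_integrable[OF continuous_on_bump[OF s]])
  show "weak_gradient G (bump s x0) (bump_grad s x0)"
    using has_derivative_bump[OF s] continuous_on_bump_grad[OF s]
    by (rule weak_gradient_if_continuously_differentiable)
  have "bump_grad s x0 \<in> borel_measurable lebesgue"
    using borel_measurable_continuous_onI[OF continuous_on_bump_grad[OF s]]
    by (intro measurable_completion) simp
  then show "bump_grad s x0 \<in> borel_measurable (restrict_space lebesgue G)"
    by (rule measurable_restrict_space1)
  show "Lnorm p G (\<lambda>x. norm (bump_grad s x0 x)) < \<infinity>"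
    using Lnorm_bump_grad_le[OF s p] by (rule le_less_trans) simp
qed

lemma Lnorm_bump_minus_const_ge:
  fixes x0 x1 :: "'a::euclidean_space" and q :: real
  assumes s: "0 < s" and q: "0 < q"
    and balls: "cball x0 (s/2) \<subseteq> S" "cball x1 (s/2) \<subseteq> S" and dist: "dist x0 x1 = 2 * s"
  shows "ereal (((1/4) powr q * unit_ball_vol DIM('a) / 2 ^ DIM('a)) powr (1/q) * s powr (DIM('a) / q))
    \<le> Lnorm q S (\<lambda>x. bump s x0 x - b)"
proof -
  obtain c where c: "cball c (s/2) \<subseteq> S" and far: "\<And>x. x \<in> cball c (s/2) \<Longrightarrow> 1/4 \<le> \<bar>bump s x0 x - b\<bar>"
  proof (cases "b \<le> 1/4")
    case True
    have "1/4 \<le> \<bar>bump s x0 x - b\<bar>" if "x \<in> cball x0 (s/2)" for x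
      using bump_ge_half[OF s, of x x0] that True by (simp add: dist_norm norm_minus_commute)
    then show thesis using that balls(1) by blast
  next
    case False
    have "1/4 \<le> \<bar>bump s x0 x - b\<bar>" if "x \<in> cball x1 (s/2)" for x
    proof -
      have "s \<le> norm (x - x0)"
        using that dist dist_triangle[of x0 x1 x] s by (simp add: dist_norm norm_minus_commute)
      from bump_eq_0_outside(1)[OF s this] show ?thesis using False by simp
    qed
    then show thesis using that balls(2) by blast
  qed
  have "ereal (((1/4) powr q * (unit_ball_vol DIM('a) * (s/2) ^ DIM('a))) powr (1/q))
      \<le> Lnorm q S (\<lambda>x. bump s x0 x - b)"
  proof (rule Lnorm_ge_if_ge_on[OF q _ _ _ _ c])
    show "emeasure lebesgue (cball c (s/2)) = ennreal (unit_ball_vol DIM('a) * (s/2) ^ DIM('a))"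
      using emeasure_cball[of "s/2" c] s by simp
    show "(1/4) powr q \<le> \<bar>bump s x0 x - b\<bar> powr q" if "x \<in> cball c (s/2)" for x
      using far[OF that] q by (intro powr_mono2) auto
  qed (use s in auto)
  also have "(1/4) powr q * (unit_ball_vol DIM('a) * (s/2) ^ DIM('a))
      = ((1/4) powr q * unit_ball_vol DIM('a) / 2 ^ DIM('a)) * s powr DIM('a)"
    using s by (simp add: powr_realpow power_divide)
  also have "\<dots> powr (1/q)
      = ((1/4) powr q * unit_ball_vol DIM('a) / 2 ^ DIM('a)) powr (1/q) * s powr (DIM('a) / q)"
    using s by (intro powr_mult_powr_scale) auto
  finally show ?thesis .
qed

lemma ereal_le_mult_bounded:
  fixes a b C :: real and L :: ereal
  assumes "ereal a \<le> ereal C * L" and "0 \<le> L" and "L \<le> ereal b"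
  shows "a \<le> max C 0 * b"
proof -
  obtain y where y: "L = ereal y" "0 \<le> y" "y \<le> b"
    using assms(2,3) by (cases L) auto
  then have "a \<le> C * y"
    using assms(1) by simp
  also have "\<dots> \<le> max C 0 * y"
    using y by (simp add: mult_right_mono)
  also have "\<dots> \<le> max C 0 * b"
    using y by (simp add: mult_left_mono)
  finally show ?thesis .
qed

lemma open_orthant: "open {x::'a::euclidean_space. \<forall>i\<in>Basis. 0 < x \<bullet> i}"
proof -
  have "{x::'a. \<forall>i\<in>Basis. 0 < x \<bullet> i} = (\<Inter>i\<in>Basis. {x. 0 < x \<bullet> i})"
    by auto
  then show ?thesis
    by (simp add: open_INT open_halfspace_component_gt)
qed

lemma cball_subset_orthant:
  fixes c :: "'a::euclidean_space"
  assumes "\<And>i. i \<in> Basis \<Longrightarrow> r < c \<bullet> i"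
  shows "cball c r \<subseteq> {x. \<forall>i\<in>Basis. 0 < x \<bullet> i}"
proof (clarify)
  fix y i :: 'a assume y: "y \<in> cball c r" and i: "i \<in> Basis"
  have "\<bar>(y - c) \<bullet> i\<bar> \<le> r"
    using Basis_le_norm[OF i, of "y - c"] y by (simp add: dist_norm norm_minus_commute)
  then show "0 < y \<bullet> i"
    using assms[OF i] by (auto simp: inner_diff_left)
qed

lemma orthant_contains_distant_balls:
  assumes "0 < s"
  obtains x0 x1 :: "'a::euclidean_space"
  where "cball x0 (s/2) \<subseteq> {x. \<forall>i\<in>Basis. 0 < x \<bullet> i}"
    and "cball x1 (s/2) \<subseteq> {x. \<forall>i\<in>Basis. 0 < x \<bullet> i}"
    and "dist x0 x1 = 2 * s"
proof -
  obtain e :: 'a where e: "e \<in> Basis"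
    using nonempty_Basis by blast
  define x0 :: 'a where "x0 = s *\<^sub>R (\<Sum>i\<in>Basis. i)"
  define x1 where "x1 = x0 + (2 * s) *\<^sub>R e"
  have x0: "x0 \<bullet> i = s" if "i \<in> Basis" for i
    using that by (simp add: x0_def inner_sum_left inner_Basis)
  have x1: "s/2 < x1 \<bullet> i" if "i \<in> Basis" for i
    using that e assms x0 by (auto simp: x1_def inner_add_left inner_Basis)
  show thesis
  proof (rule that)
    show "cball x0 (s/2) \<subseteq> {x. \<forall>i\<in>Basis. 0 < x \<bullet> i}"
      using x0 assms by (intro cball_subset_orthant) auto
    show "cball x1 (s/2) \<subseteq> {x. \<forall>i\<in>Basis. 0 < x \<bullet> i}"
      using x1 by (intro cball_subset_orthant)
    show "dist x0 x1 = 2 * s"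
      using e assms by (simp add: x1_def dist_norm)
  qed
qed

lemma sobolev_exponent_if_poincare_on_orthant:
  fixes G :: "'a::euclidean_space set" and p q C :: real
  assumes p: "0 < p" "p < DIM('a)" and q: "0 < q"
    and orthant: "{x. \<forall>i\<in>Basis. 0 < x \<bullet> i} \<subseteq> G"
    and poincare: "\<forall>u g. L1p p G u g \<longrightarrow>
      (INF b. Lnorm q G (\<lambda>x. u x - b)) \<le> ereal C * Lnorm p G (\<lambda>x. norm (g x))"
  shows "q = DIM('a) * p / (DIM('a) - p)"
proof -
  define n where "n = real DIM('a)"
  define K1 where "K1 = ((1/4) powr q * unit_ball_vol n / 2 ^ DIM('a)) powr (1/q)"
  define K2 where "K2 = (4 powr p * unit_ball_vol n) powr (1/p)"
  have "0 < unit_ball_vol n"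
    by (simp add: n_def)
  then have "0 < K1" "0 < K2"
    by (simp_all add: K1_def K2_def)
  have scaled: "K1 * s powr (n/q) \<le> max C 0 * (K2 * s powr ((n - p)/p))" if s: "0 < s" for s
  proof -
    obtain x0 x1 :: 'a where balls: "cball x0 (s/2) \<subseteq> {x. \<forall>i\<in>Basis. 0 < x \<bullet> i}"
        "cball x1 (s/2) \<subseteq> {x. \<forall>i\<in>Basis. 0 < x \<bullet> i}" and "dist x0 x1 = 2 * s"
      by (rule orthant_contains_distant_balls[OF s])
    moreover have "cball x0 (s/2) \<subseteq> G" "cball x1 (s/2) \<subseteq> G"
      using order_trans[OF balls(1) orthant] order_trans[OF balls(2) orthant] .
    ultimately have "ereal (K1 * s powr (n/q)) \<le> (INF b. Lnorm q G (\<lambda>x. bump s x0 x - b))"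
      unfolding K1_def n_def by (intro INF_greatest Lnorm_bump_minus_const_ge[OF s q])
    also have "\<dots> \<le> ereal C * Lnorm p G (\<lambda>x. norm (bump_grad s x0 x))"
      using poincare L1p_bump[OF s p(1)] by blast
    finally show ?thesis
      using Lnorm_nonneg Lnorm_bump_grad_le[OF s p(1), of G x0] unfolding K2_def n_def
      by (rule ereal_le_mult_bounded)
  qed
  have "\<forall>s>0. s powr (n/q - (n - p)/p) \<le> max C 0 * K2 / K1"
  proof (intro allI impI)
    fix s :: real assume s: "0 < s"
    have "s powr (n/q - (n - p)/p) = s powr (n/q) / s powr ((n - p)/p)"
      by (simp add: powr_diff)
    also have "\<dots> \<le> max C 0 * K2 / K1"
      using scaled[OF s] \<open>0 < K1\<close> s by (simp add: divide_simps mult.commute mult.left_commute)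
    finally show "s powr (n/q - (n - p)/p) \<le> max C 0 * K2 / K1" .
  qed
  then have "n/q - (n - p)/p = 0"
    by (rule powr_bounded_imp_exponent_eq_0)
  moreover have "0 < n - p"
    using p unfolding n_def by simp
  ultimately show ?thesis
    using p q unfolding n_def by (simp add: field_simps)
qed

lemma orthant_subset_mushroom_domain:
  assumes "mushroom_domain e1 e2 \<phi> G"
  shows "{x. \<forall>i\<in>Basis. 0 < x \<bullet> i} \<subseteq> G"
proof -
  obtain X where "G = interior ({x. \<forall>i\<in>Basis. 0 < x \<bullet> i} \<union> X)"
    using assms unfolding mushroom_domain_def by blast
  then show ?thesis
    by (simp add: interior_maximal open_orthant)
qed

theorem theorem6p2:
  fixes \<phi> :: "real \<Rightarrow> real" and p q C m :: real
    and G :: "'a::euclidean_space set" and e1 e2 :: 'a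
  assumes "DIM('a) \<ge> 2"
    and "1 \<le> p" and "p < real DIM('a)"
    and "admissible_phi \<phi>"
    and "((\<lambda>t. t / \<phi> t) \<longlongrightarrow> m) (at_right 0)"
    and "e1 \<in> Basis" and "e2 \<in> Basis" and "e1 \<noteq> e2"
    and "mushroom_domain e1 e2 \<phi> G"
    and "1 \<le> q"
    and "\<forall>u g. L1p p G u g \<longrightarrow>
            (INF b. Lnorm q G (\<lambda>x. u x - b)) \<le> ereal C * Lnorm p G (\<lambda>x. norm (g x))"
  shows "q = real DIM('a) * p / (real DIM('a) - p) \<and>
         (\<exists>t0>0. \<exists>c1 c2. 0 < c1 \<and> c1 \<le> c2 \<and>
            (\<forall>t\<in>{0<..t0}. c1 * t \<le> \<phi> t \<and> \<phi> t \<le> c2 * t))"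
proof
  show "q = real DIM('a) * p / (real DIM('a) - p)"
    using assms(2,3,10,11) orthant_subset_mushroom_domain[OF assms(9)]
    by (intro sobolev_exponent_if_poincare_on_orthant) auto
  have pos: "\<And>t. 0 < t \<Longrightarrow> 0 < \<phi> t"
    using admissible_phi_pos[OF assms(4)] .
  obtain r :: "nat \<Rightarrow> real" where r: "\<And>k. 0 < r k" "r \<longlonglongrightarrow> 0" "\<And>k. \<phi> (r k) \<le> r k"
    using assms(9) unfolding mushroom_domain_def by blast
  have "1 \<le> m"
    using pos assms(5) r by (rule ratio_limit_ge_1)
  then show "\<exists>t0>0. \<exists>c1 c2. 0 < c1 \<and> c1 \<le> c2 \<and> (\<forall>t\<in>{0<..t0}. c1 * t \<le> \<phi> t \<and> \<phi> t \<le> c2 * t)"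
    using pos assms(5) by (intro linear_bounds_near_0_if_ratio_tendsto) auto
qed

end
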